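(* For every integer $d\ge3$, $$\lim_{\nu\downarrow0}\frac1\nu\big(\vartheta_{d,\nu}-\vartheta_{d,0}\big)=\frac{d}{2(d-2)^2},\qquad \lim_{\nu\to\infty}\nu\big(1-\vartheta_{d,\nu}\big)=\frac2d,$$ while for every $\nu>0$, $$\lim_{d\to\infty}d\big(1-\vartheta_{d,\nu}\big)=\frac{2}{\nu+2}.$$
   Context: For $d\ge2$ and $\nu\in[0,\infty)$ let $\beta_d=\sqrt{d-1}$, $\rho_d=2\sqrt{d-1}/d$, let $\Delta_{d,\nu}$ be the continued fraction $\Delta_{d,\nu}=\cfrac{1}{a_1-\cfrac{1}{a_2-\cfrac{1}{a_3-\cdots}}}$ with $a_i=\frac{2+i\nu}{\rho_d}$, and define $\vartheta_{d,\nu}=1-\Delta_{d,\nu}/\beta_d$. *)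

theory Defs
  imports "HOL-Analysis.Analysis"
begin

fun cf_trunc :: "(nat \<Rightarrow> real) \<Rightarrow> nat \<Rightarrow> real" where
  "cf_trunc a 0 = 0"
| "cf_trunc a (Suc n) = 1 / (a 0 - cf_trunc (\<lambda>i. a (Suc i)) n)"

definition beta_d :: "nat \<Rightarrow> real" where
  "beta_d d = sqrt (real d - 1)"

definition rho_d :: "nat \<Rightarrow> real" where
  "rho_d d = 2 * sqrt (real d - 1) / real d"

definition cf_coeff :: "nat \<Rightarrow> real \<Rightarrow> nat \<Rightarrow> real" where
  "cf_coeff d \<nu> i = (2 + real i * \<nu>) / rho_d d"

definition Delta :: "nat \<Rightarrow> real \<Rightarrow> real" where
  "Delta d \<nu> = lim (\<lambda>n. cf_trunc (\<lambda>i. cf_coeff d \<nu> (Suc i)) n)"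

definition theta :: "nat \<Rightarrow> real \<Rightarrow> real" where
  "theta d \<nu> = 1 - Delta d \<nu> / beta_d d"

end

theory Submission
  imports Defs "HOL-Real_Asymp.Real_Asymp"
begin

text \<open>Put x = 1/beta_d and r = 1/rho_d. As beta_d^2 = d - 1, the coefficients are
a_i = x + 1/x + i nu r, and the continued fraction with constant entries x + 1/x has value x,
so Delta_{d,0} = x. For nu > 0 the errors e_i = x - D_i of the tails D_i of Delta_{d,nu}
satisfy e_i = x D_i ((i+1) nu r + e_{i+1}) with 0 \<le> e_i \<le> x. Replacing the factor x D_i by
x^2 gives a linear recursion with an explicit solution that is linear in i; the true recursion
differs from it by O(nu^2 i^2), which an explicit quadratic solution absorbs. Since x^2 < 1,
a maximum principle for such contracting recursions yields
x - Delta_{d,nu} = gamma nu + O(nu^2), and gamma / beta_d = d/(2(d-2)^2).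
The limits as nu and d tend to infinity need only the first-level bounds
1/a_1 \<le> Delta_{d,nu} \<le> 1/(a_1 - 1).\<close>

definition cf_limit :: "(nat \<Rightarrow> real) \<Rightarrow> real" where
  "cf_limit a = lim (cf_trunc a)"

lemma cf_trunc_bounds:
  assumes "\<And>i. 2 \<le> a i"
  shows "0 \<le> cf_trunc a n \<and> cf_trunc a n \<le> 1"
  using assms
proof (induction n arbitrary: a)
  case (Suc n)
  then have "0 \<le> cf_trunc (\<lambda>i. a (Suc i)) n" "cf_trunc (\<lambda>i. a (Suc i)) n \<le> 1" "2 \<le> a 0"
    by auto
  then show ?case by simp
qed simp

lemma cf_trunc_le_Suc:
  assumes "\<And>i. 2 \<le> a i"
  shows "cf_trunc a n \<le> cf_trunc a (Suc n)"
  using assms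
proof (induction n arbitrary: a)
  case 0
  then have "0 \<le> a 0"
    by (meson order_trans zero_le_numeral)
  then show ?case by simp
next
  case (Suc n)
  let ?a' = "\<lambda>i. a (Suc i)"
  have "cf_trunc ?a' n \<le> cf_trunc ?a' (Suc n)" "cf_trunc ?a' (Suc n) \<le> 1" "2 \<le> a 0"
    using Suc.IH[of ?a'] cf_trunc_bounds[of ?a' "Suc n"] Suc.prems by auto
  then have "1 / (a 0 - cf_trunc ?a' n) \<le> 1 / (a 0 - cf_trunc ?a' (Suc n))"
    by (intro divide_left_mono) auto
  then show ?case
    by (simp only: cf_trunc.simps(2))
qed

lemma cf_trunc_antimono:
  assumes "\<And>i. 2 \<le> a i" "\<And>i. a i \<le> b i"
  shows "cf_trunc b n \<le> cf_trunc a n"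
  using assms
proof (induction n arbitrary: a b)
  case (Suc n)
  let ?a' = "\<lambda>i. a (Suc i)" and ?b' = "\<lambda>i. b (Suc i)"
  have "cf_trunc ?b' n \<le> cf_trunc ?a' n" "cf_trunc ?a' n \<le> 1" "2 \<le> a 0" "a 0 \<le> b 0"
    using Suc.IH[of ?a' ?b'] cf_trunc_bounds[of ?a'] Suc.prems by auto
  then have "1 / (b 0 - cf_trunc ?b' n) \<le> 1 / (a 0 - cf_trunc ?a' n)"
    by (intro divide_left_mono) auto
  then show ?case by simp
qed simp

lemma LIMSEQ_cf_limit:
  assumes "\<And>i. 2 \<le> a i"
  shows "cf_trunc a \<longlonglongrightarrow> cf_limit a"
proof -
  obtain L where "cf_trunc a \<longlonglongrightarrow> L"
    using incseq_convergent[of "cf_trunc a" 1] cf_trunc_le_Suc[of a] cf_trunc_bounds[of a] assms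
    by (metis incseq_SucI)
  then show ?thesis
    unfolding cf_limit_def by (simp add: limI)
qed

lemma cf_limit_bounds:
  assumes "\<And>i. 2 \<le> a i"
  shows "0 \<le> cf_limit a \<and> cf_limit a \<le> 1"
  using LIMSEQ_le_const[OF LIMSEQ_cf_limit[of a, OF assms]]
    LIMSEQ_le_const2[OF LIMSEQ_cf_limit[of a, OF assms]] cf_trunc_bounds[of a, OF assms]
  by blast

lemma cf_limit_unfold:
  assumes "\<And>i. 2 \<le> a i"
  shows "cf_limit a = 1 / (a 0 - cf_limit (\<lambda>i. a (Suc i)))"
proof -
  let ?a' = "\<lambda>i. a (Suc i)"
  have "2 \<le> a 0" "cf_limit ?a' \<le> 1"
    using assms cf_limit_bounds[of ?a'] by auto
  then have "a 0 - cf_limit ?a' \<noteq> 0"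
    by linarith
  then have "(\<lambda>n. 1 / (a 0 - cf_trunc ?a' n)) \<longlonglongrightarrow> 1 / (a 0 - cf_limit ?a')"
    using assms by (intro tendsto_intros LIMSEQ_cf_limit) auto
  then have "(\<lambda>n. cf_trunc a (Suc n)) \<longlonglongrightarrow> 1 / (a 0 - cf_limit ?a')"
    by simp
  moreover have "(\<lambda>n. cf_trunc a (Suc n)) \<longlonglongrightarrow> cf_limit a"
    using LIMSEQ_cf_limit[of a, OF assms] by (rule LIMSEQ_Suc)
  ultimately show ?thesis
    using LIMSEQ_unique by blast
qed

lemma cf_limit_antimono:
  assumes "\<And>i. 2 \<le> a i" "\<And>i. a i \<le> b i"
  shows "cf_limit b \<le> cf_limit a"
proof -
  have "2 \<le> b i" for i
    using assms order_trans by blast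
  then have "cf_trunc b \<longlonglongrightarrow> cf_limit b"
    by (rule LIMSEQ_cf_limit)
  then show ?thesis
    using LIMSEQ_cf_limit[of a] cf_trunc_antimono[of a b] assms by (intro LIMSEQ_le) auto
qed

lemma cf_limit_first_bounds:
  assumes "\<And>i. 2 \<le> a i"
  shows "1 / a 0 \<le> cf_limit a \<and> cf_limit a \<le> 1 / (a 0 - 1)"
proof -
  let ?a' = "\<lambda>i. a (Suc i)"
  have "0 \<le> cf_limit ?a'" "cf_limit ?a' \<le> 1" "2 \<le> a 0"
    using cf_limit_bounds[of ?a'] assms by auto
  then have "1 / a 0 \<le> 1 / (a 0 - cf_limit ?a')" "1 / (a 0 - cf_limit ?a') \<le> 1 / (a 0 - 1)"
    by (intro divide_left_mono; simp)+
  then show ?thesis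
    using cf_limit_unfold[of a, OF assms] by simp
qed

lemma two_le_inverse_add:
  fixes b :: real
  assumes "0 < b"
  shows "2 \<le> 1 / b + b"
proof -
  have "0 \<le> (b - 1)\<^sup>2 / b"
    using assms by simp
  also have "(b - 1)\<^sup>2 / b = 1 / b + b - 2"
    using assms by (simp add: field_simps power2_eq_square)
  finally show ?thesis by simp
qed

lemma cf_limit_const:
  fixes b :: real
  assumes "1 \<le> b"
  shows "cf_limit (\<lambda>_. 1 / b + b) = 1 / b"
proof -
  define D where "D = cf_limit (\<lambda>_. 1 / b + b)"
  have ge2: "2 \<le> 1 / b + b"
    using assms by (intro two_le_inverse_add) simp
  have D_bounds: "0 \<le> D" "D \<le> 1"
    unfolding D_def using cf_limit_bounds[of "\<lambda>_. 1 / b + b"] ge2 by auto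
  have "D = 1 / (1 / b + b - D)"
    unfolding D_def using cf_limit_unfold[of "\<lambda>_. 1 / b + b"] ge2 by simp
  then have "D * (1 / b + b - D) = 1"
    using D_bounds ge2 by (simp add: field_simps)
  then have "(D - 1 / b) * (D - b) = 0"
    using assms by (simp add: field_simps)
  then show ?thesis
    unfolding D_def[symmetric] using D_bounds assms by auto
qed

lemma nonneg_of_geometric_supersolution:
  fixes g :: "nat \<Rightarrow> real"
  assumes q: "0 \<le> q" "q < 1"
    and super: "\<And>i. q * g (Suc i) \<le> g i"
    and growth: "\<And>i. - (M + N * real i) \<le> g i"
  shows "0 \<le> g i"
proof -
  have iterate: "q ^ n * g (i + n) \<le> g i" for n i
  proof (induction n arbitrary: i)
    case (Suc n)
    have "q ^ Suc n * g (i + Suc n) = q * (q ^ n * g (Suc i + n))"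
      by simp
    also have "\<dots> \<le> q * g (Suc i)"
      using Suc[of "Suc i"] q by (intro mult_left_mono) auto
    also have "\<dots> \<le> g i"
      by (rule super)
    finally show ?case .
  qed simp
  have "- (q ^ n * (M + N * real i) + N * (real n * q ^ n)) \<le> g i" for n
  proof -
    have "q ^ n * (- (M + N * real (i + n))) \<le> q ^ n * g (i + n)"
      using growth[of "i + n"] q by (intro mult_left_mono) auto
    then show ?thesis
      using iterate[of n i] by (simp add: algebra_simps)
  qed
  moreover have "(\<lambda>n. - (q ^ n * (M + N * real i) + N * (real n * q ^ n)))
      \<longlonglongrightarrow> - (0 * (M + N * real i) + N * 0)"
    using q by (intro tendsto_intros LIMSEQ_power_zero powser_times_n_limit_0) auto
  ultimately show ?thesis
    by (intro LIMSEQ_le_const2) auto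
qed

text \<open>The solution sum_k q^k s (i + k + 1) of g_i = q g_(i+1) + s (i + 1).\<close>
definition lin_solution :: "real \<Rightarrow> real \<Rightarrow> nat \<Rightarrow> real" where
  "lin_solution q s i = s / (1 - q) * real i + s / (1 - q)\<^sup>2"

lemma lin_solution_rec:
  assumes "q \<noteq> 1"
  shows "lin_solution q s i = q * lin_solution q s (Suc i) + s * (real i + 1)"
proof -
  define p where "p = 1 - q"
  have "p \<noteq> 0" and q: "q = 1 - p"
    using assms unfolding p_def by auto
  then show ?thesis
    unfolding lin_solution_def p_def[symmetric] by (simp add: q field_simps power2_eq_square)
qed

lemma lin_solution_nonneg:
  assumes "0 \<le> q" "q < 1" "0 \<le> s"
  shows "0 \<le> lin_solution q s i"
  using assms unfolding lin_solution_def by simp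

lemma lin_solution_le:
  assumes "0 \<le> q" "q < 1" "0 \<le> s"
  shows "lin_solution q s i \<le> lin_solution q s 0 * (real i + 1)"
proof -
  have "s / (1 - q) \<le> s / (1 - q)\<^sup>2"
    using assms by (intro divide_left_mono) (auto simp: power2_eq_square mult_le_cancel_left1)
  then have "s / (1 - q) * real i \<le> s / (1 - q)\<^sup>2 * real i"
    by (rule mult_right_mono) simp
  then have "lin_solution q s i \<le> s / (1 - q)\<^sup>2 * real i + s / (1 - q)\<^sup>2"
    unfolding lin_solution_def by linarith
  also have "\<dots> = lin_solution q s 0 * (real i + 1)"
    unfolding lin_solution_def by (simp add: distrib_left)
  finally show ?thesis .
qed

text \<open>The solution sum_k q^k K (i + k + 1)^2 of g_i = q g_(i+1) + K (i + 1)^2.\<close>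
definition quad_solution :: "real \<Rightarrow> real \<Rightarrow> nat \<Rightarrow> real" where
  "quad_solution q K i =
     (let A = K / (1 - q); B = (2 * q * A + 2 * K) / (1 - q); C = (q * (A + B) + K) / (1 - q)
      in A * (real i)\<^sup>2 + B * real i + C)"

lemma quad_solution_rec:
  assumes "q \<noteq> 1"
  shows "quad_solution q K i = q * quad_solution q K (Suc i) + K * (real i + 1)\<^sup>2"
proof -
  define A where "A = K / (1 - q)"
  define B where "B = (2 * q * A + 2 * K) / (1 - q)"
  define C where "C = (q * (A + B) + K) / (1 - q)"
  have q: "1 - q \<noteq> 0"
    using assms by simp
  have "A = q * A + K"
    using q unfolding A_def by (simp add: field_simps)
  moreover have "B = q * (2 * A + B) + 2 * K"
    using q unfolding B_def by (simp add: field_simps)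
  moreover have "C = q * (A + B + C) + K"
    using q unfolding C_def by (simp add: field_simps)
  moreover have "q * (A * (real i + 1)\<^sup>2 + B * (real i + 1) + C) + K * (real i + 1)\<^sup>2
      = (q * A + K) * (real i)\<^sup>2 + (q * (2 * A + B) + 2 * K) * real i + (q * (A + B + C) + K)"
    by (simp add: algebra_simps power2_eq_square)
  ultimately show ?thesis
    unfolding quad_solution_def Let_def A_def[symmetric] B_def[symmetric] C_def[symmetric]
    by (simp add: add.commute)
qed

lemma quad_solution_nonneg:
  assumes "0 \<le> q" "q < 1" "0 \<le> K"
  shows "0 \<le> quad_solution q K i"
  using assms unfolding quad_solution_def Let_def by simp

definition first_order_coeff :: "real \<Rightarrow> real \<Rightarrow> real" where
  "first_order_coeff x r = lin_solution (x\<^sup>2) (x\<^sup>2 * r) 0"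

definition second_order_coeff :: "real \<Rightarrow> real \<Rightarrow> real" where
  "second_order_coeff x r =
     (let \<gamma> = first_order_coeff x r in quad_solution (x\<^sup>2) (x * \<gamma> * (r + 2 * \<gamma>)) 0)"

text \<open>D_i is the tail of the continued fraction that starts at the coefficient
  x + 1/x + (i+1) nu r; for nu = 0 every tail equals x.\<close>
locale cf_tail =
  fixes x r \<nu> :: real and D :: "nat \<Rightarrow> real"
  assumes x_pos: "0 < x" and x_less_1: "x < 1" and r_pos: "0 < r" and nu_nonneg: "0 \<le> \<nu>"
    and tail_eq: "D i * (x + 1 / x + (real i + 1) * \<nu> * r - D (Suc i)) = 1"
    and tail_nonneg: "0 \<le> D i" and tail_le: "D i \<le> x"
begin

definition err :: "nat \<Rightarrow> real" where
  "err i = x - D i"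

abbreviation (input) \<gamma> :: real where
  "\<gamma> \<equiv> first_order_coeff x r"

abbreviation (input) \<kappa> :: real where
  "\<kappa> \<equiv> x * \<gamma> * (r + 2 * \<gamma>)"

lemma x_sq_bounds: "0 \<le> x\<^sup>2" "x\<^sup>2 < 1"
  using x_pos x_less_1 by (auto simp: power_less_one_iff)

lemma err_bounds: "0 \<le> err i" "err i \<le> x"
  unfolding err_def using tail_nonneg tail_le by auto

lemma err_eq: "err i = x * D i * ((real i + 1) * \<nu> * r + err (Suc i))"
proof -
  have "x * D i * ((real i + 1) * \<nu> * r + err (Suc i))
      = x * (D i * (x + 1 / x + (real i + 1) * \<nu> * r - D (Suc i))) - D i"
    unfolding err_def using x_pos by (simp add: field_simps)
  then show ?thesis
    unfolding tail_eq err_def by simp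
qed

lemma linear_bound_nonneg: "0 \<le> \<nu> * lin_solution (x\<^sup>2) (x\<^sup>2 * r) i"
  using lin_solution_nonneg[of "x\<^sup>2" "x\<^sup>2 * r" i] x_sq_bounds r_pos nu_nonneg by simp

lemma err_le_linear: "err i \<le> \<nu> * lin_solution (x\<^sup>2) (x\<^sup>2 * r) i"
proof -
  let ?U = "\<lambda>i. \<nu> * lin_solution (x\<^sup>2) (x\<^sup>2 * r) i"
  have "0 \<le> ?U i - err i"
  proof (rule nonneg_of_geometric_supersolution[where q = "x\<^sup>2" and M = x and N = 0])
    show "x\<^sup>2 * (?U (Suc i) - err (Suc i)) \<le> ?U i - err i" for i
    proof -
      have "x * D i \<le> x\<^sup>2"
        using tail_le x_pos by (simp add: power2_eq_square)
      then have "err i \<le> x\<^sup>2 * ((real i + 1) * \<nu> * r + err (Suc i))"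
        unfolding err_eq[of i]
        using nu_nonneg r_pos err_bounds by (intro mult_right_mono) auto
      moreover have "?U i = x\<^sup>2 * ?U (Suc i) + \<nu> * (x\<^sup>2 * r) * (real i + 1)"
        using lin_solution_rec[of "x\<^sup>2" "x\<^sup>2 * r" i] x_sq_bounds by (simp add: algebra_simps)
      ultimately show ?thesis
        by (simp add: algebra_simps)
    qed
    show "- (x + 0 * real i) \<le> ?U i - err i" for i
      using linear_bound_nonneg[of i] err_bounds(2)[of i] by simp
  qed (use x_sq_bounds in auto)
  then show ?thesis by simp
qed

lemma first_order_coeff_nonneg: "0 \<le> \<gamma>"
  unfolding first_order_coeff_def using lin_solution_nonneg x_sq_bounds r_pos by simp

lemma linear_bound_le: "\<nu> * lin_solution (x\<^sup>2) (x\<^sup>2 * r) i \<le> \<nu> * \<gamma> * (real i + 1)"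
proof -
  have "lin_solution (x\<^sup>2) (x\<^sup>2 * r) i \<le> \<gamma> * (real i + 1)"
    unfolding first_order_coeff_def using lin_solution_le x_sq_bounds r_pos by simp
  then have "\<nu> * lin_solution (x\<^sup>2) (x\<^sup>2 * r) i \<le> \<nu> * (\<gamma> * (real i + 1))"
    using nu_nonneg by (rule mult_left_mono)
  then show ?thesis
    by (simp add: mult.assoc)
qed

lemma err_le_first_order: "err i \<le> \<nu> * \<gamma> * (real i + 1)"
  using err_le_linear[of i] linear_bound_le[of i] by linarith

lemma err_ge_linear_step:
  "x\<^sup>2 * ((real i + 1) * \<nu> * r + err (Suc i)) - \<nu>\<^sup>2 * \<kappa> * (real i + 1)\<^sup>2 \<le> err i"
proof -
  define s where "s = (real i + 1) * \<nu> * r + err (Suc i)"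
  have s_nonneg: "0 \<le> s"
    unfolding s_def using nu_nonneg r_pos err_bounds by simp
  have err_i: "err i = x\<^sup>2 * s - x * err i * s"
    using err_eq[of i] unfolding s_def err_def by (simp add: algebra_simps power2_eq_square)
  have "0 \<le> \<nu> * \<gamma> * real i"
    using nu_nonneg first_order_coeff_nonneg by simp
  then have "\<nu> * \<gamma> * (real (Suc i) + 1) \<le> 2 * (\<nu> * \<gamma> * (real i + 1))"
    by (simp add: algebra_simps)
  then have "err (Suc i) \<le> 2 * (\<nu> * \<gamma> * (real i + 1))"
    using err_le_first_order[of "Suc i"] by linarith
  then have "s \<le> \<nu> * (real i + 1) * (r + 2 * \<gamma>)"
    unfolding s_def by (simp add: algebra_simps)
  then have "err i * s \<le> (\<nu> * \<gamma> * (real i + 1)) * (\<nu> * (real i + 1) * (r + 2 * \<gamma>))"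
    using err_le_first_order[of i] err_bounds(1)[of i] s_nonneg by (intro mult_mono) auto
  then have "x * (err i * s) \<le> x * ((\<nu> * \<gamma> * (real i + 1)) * (\<nu> * (real i + 1) * (r + 2 * \<gamma>)))"
    using x_pos by (intro mult_left_mono) auto
  also have "\<dots> = \<nu>\<^sup>2 * \<kappa> * (real i + 1)\<^sup>2"
    by (simp add: algebra_simps power2_eq_square)
  finally have "x * err i * s \<le> \<nu>\<^sup>2 * \<kappa> * (real i + 1)\<^sup>2"
    by (simp add: mult.assoc)
  then show ?thesis
    using err_i unfolding s_def by linarith
qed

lemma err_ge_quadratic:
  "\<nu> * lin_solution (x\<^sup>2) (x\<^sup>2 * r) i - \<nu>\<^sup>2 * quad_solution (x\<^sup>2) \<kappa> i \<le> err i"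
proof -
  let ?L = "\<lambda>i. \<nu> * lin_solution (x\<^sup>2) (x\<^sup>2 * r) i - \<nu>\<^sup>2 * quad_solution (x\<^sup>2) \<kappa> i"
  have "0 \<le> err i - ?L i"
  proof (rule nonneg_of_geometric_supersolution[where q = "x\<^sup>2" and M = "\<nu> * \<gamma>" and N = "\<nu> * \<gamma>"])
    show "x\<^sup>2 * (err (Suc i) - ?L (Suc i)) \<le> err i - ?L i" for i
    proof -
      have "?L i = x\<^sup>2 * ((real i + 1) * \<nu> * r + ?L (Suc i)) - \<nu>\<^sup>2 * \<kappa> * (real i + 1)\<^sup>2"
        using lin_solution_rec[of "x\<^sup>2" "x\<^sup>2 * r" i] quad_solution_rec[of "x\<^sup>2" \<kappa> i] x_sq_bounds
        by (simp add: algebra_simps)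
      then show ?thesis
        using err_ge_linear_step[of i] by (simp add: algebra_simps)
    qed
    show "- (\<nu> * \<gamma> + \<nu> * \<gamma> * real i) \<le> err i - ?L i" for i
    proof -
      have "0 \<le> quad_solution (x\<^sup>2) \<kappa> i"
        using quad_solution_nonneg x_sq_bounds x_pos r_pos first_order_coeff_nonneg by simp
      then have "0 \<le> \<nu>\<^sup>2 * quad_solution (x\<^sup>2) \<kappa> i"
        by simp
      moreover have "\<nu> * \<gamma> * (real i + 1) = \<nu> * \<gamma> + \<nu> * \<gamma> * real i"
        by (simp add: algebra_simps)
      ultimately show ?thesis
        using linear_bound_le[of i] err_bounds(1)[of i] by linarith
    qed
  qed (use x_sq_bounds in auto)
  then show ?thesis by simp
qed

lemma first_order_bounds:
  "x - D 0 \<le> \<nu> * first_order_coeff x r"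
  "\<nu> * first_order_coeff x r - \<nu>\<^sup>2 * second_order_coeff x r \<le> x - D 0"
  using err_le_linear[of 0] err_ge_quadratic[of 0]
  unfolding err_def first_order_coeff_def second_order_coeff_def Let_def by simp_all

end

lemma beta_d_square: "1 \<le> d \<Longrightarrow> (beta_d d)\<^sup>2 = real d - 1"
  unfolding beta_d_def by simp

lemma beta_d_ge_1: "2 \<le> d \<Longrightarrow> 1 \<le> beta_d d"
  unfolding beta_d_def by simp

lemma beta_d_gt_1: "3 \<le> d \<Longrightarrow> 1 < beta_d d"
  unfolding beta_d_def by simp

lemma rho_d_pos: "2 \<le> d \<Longrightarrow> 0 < rho_d d"
  unfolding rho_d_def by simp

lemma rho_d_div_beta_d: "2 \<le> d \<Longrightarrow> rho_d d / beta_d d = 2 / real d"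
  unfolding rho_d_def beta_d_def by simp

lemma cf_coeff_Suc:
  assumes "2 \<le> d"
  shows "cf_coeff d \<nu> (Suc i) = 1 / beta_d d + beta_d d + (real i + 1) * \<nu> * (1 / rho_d d)"
proof -
  have "2 / rho_d d = real d / beta_d d"
    using assms unfolding rho_d_def beta_d_def by simp
  also have "\<dots> = 1 / beta_d d + beta_d d"
    using assms beta_d_square[of d] beta_d_ge_1[of d] by (simp add: field_simps power2_eq_square)
  finally show ?thesis
    unfolding cf_coeff_def by (simp add: add_divide_distrib)
qed

lemma cf_coeff_Suc_ge:
  assumes "2 \<le> d" "0 \<le> \<nu>"
  shows "1 / beta_d d + beta_d d \<le> cf_coeff d \<nu> (Suc i)"
  using assms rho_d_pos[of d] unfolding cf_coeff_Suc[OF assms(1)] by simp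

lemma two_le_cf_coeff_Suc:
  assumes "2 \<le> d" "0 \<le> \<nu>"
  shows "2 \<le> cf_coeff d \<nu> (Suc i)"
proof -
  have "2 \<le> 1 / beta_d d + beta_d d"
    using beta_d_ge_1[OF assms(1)] by (intro two_le_inverse_add) simp
  then show ?thesis
    using cf_coeff_Suc_ge[OF assms, of i] by linarith
qed

lemma Delta_eq_cf_limit: "Delta d \<nu> = cf_limit (\<lambda>i. cf_coeff d \<nu> (Suc i))"
  unfolding Delta_def cf_limit_def ..

lemma Delta_zero:
  assumes "2 \<le> d"
  shows "Delta d 0 = 1 / beta_d d"
  using cf_limit_const[OF beta_d_ge_1[OF assms]]
  unfolding Delta_eq_cf_limit cf_coeff_Suc[OF assms] by simp

lemma Delta_first_order_bounds:
  assumes d: "3 \<le> d" and \<nu>: "0 \<le> \<nu>"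
  shows "1 / beta_d d - Delta d \<nu> \<le> \<nu> * first_order_coeff (1 / beta_d d) (1 / rho_d d)"
    and "\<nu> * first_order_coeff (1 / beta_d d) (1 / rho_d d)
           - \<nu>\<^sup>2 * second_order_coeff (1 / beta_d d) (1 / rho_d d) \<le> 1 / beta_d d - Delta d \<nu>"
proof -
  have d2: "2 \<le> d"
    using d by simp
  let ?a = "\<lambda>i k. cf_coeff d \<nu> (Suc (k + i))"
  have a_ge: "2 \<le> ?a i k" for i k
    using two_le_cf_coeff_Suc[OF d2 \<nu>] .
  interpret cf_tail "1 / beta_d d" "1 / rho_d d" \<nu> "\<lambda>i. cf_limit (?a i)"
  proof
    show "0 < 1 / beta_d d" "1 / beta_d d < 1" "0 < 1 / rho_d d" "0 \<le> \<nu>"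
      using beta_d_gt_1[OF d] rho_d_pos[OF d2] \<nu> by auto
    show "0 \<le> cf_limit (?a i)" for i
      using cf_limit_bounds[of "?a i"] a_ge by blast
    show "cf_limit (?a i) \<le> 1 / beta_d d" for i
      using cf_limit_antimono[of "\<lambda>_. 1 / beta_d d + beta_d d" "?a i"] cf_limit_const[of "beta_d d"]
        cf_coeff_Suc_ge[OF d2 \<nu>] two_le_inverse_add[of "beta_d d"] beta_d_ge_1[OF d2]
      by simp
    show "cf_limit (?a i) * (1 / beta_d d + 1 / (1 / beta_d d) + (real i + 1) * \<nu> * (1 / rho_d d)
        - cf_limit (?a (Suc i))) = 1" for i
    proof -
      have "cf_limit (?a i) = 1 / (cf_coeff d \<nu> (Suc i) - cf_limit (?a (Suc i)))"
        using cf_limit_unfold[of "?a i"] a_ge by simp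
      moreover have "cf_limit (?a (Suc i)) \<le> 1"
        using cf_limit_bounds[of "?a (Suc i)"] a_ge by blast
      ultimately show ?thesis
        using a_ge[of i 0] unfolding cf_coeff_Suc[OF d2] by simp
    qed
  qed
  show "1 / beta_d d - Delta d \<nu> \<le> \<nu> * first_order_coeff (1 / beta_d d) (1 / rho_d d)"
    using first_order_bounds(1) unfolding Delta_eq_cf_limit by simp
  show "\<nu> * first_order_coeff (1 / beta_d d) (1 / rho_d d)
      - \<nu>\<^sup>2 * second_order_coeff (1 / beta_d d) (1 / rho_d d) \<le> 1 / beta_d d - Delta d \<nu>"
    using first_order_bounds(2) unfolding Delta_eq_cf_limit by simp
qed

lemma first_order_coeff_Delta:
  assumes "3 \<le> d"
  shows "first_order_coeff (1 / beta_d d) (1 / rho_d d) / beta_d d = real d / (2 * (real d - 2)\<^sup>2)"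
proof -
  define t where "t = real d - 1"
  have t: "t \<noteq> 0" "t - 1 \<noteq> 0" "real d - 2 = t - 1"
    using assms unfolding t_def by auto
  have x_sq: "(1 / beta_d d)\<^sup>2 = 1 / t"
    using beta_d_square[of d] assms unfolding t_def by (simp add: power_divide)
  have r_div: "1 / rho_d d / beta_d d = real d / (2 * t)"
    using assms unfolding rho_d_def beta_d_def t_def by (simp add: mult.assoc)
  have "first_order_coeff (1 / beta_d d) (1 / rho_d d) / beta_d d
      = 1 / t * (real d / (2 * t)) / (1 - 1 / t)\<^sup>2"
    unfolding first_order_coeff_def lin_solution_def x_sq[symmetric] r_div[symmetric]
    by (simp add: ac_simps)
  also have "\<dots> = real d / (2 * (real d - 2)\<^sup>2)"
  proof -
    have "1 - 1 / t = (t - 1) / t"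
      using t by (simp add: field_simps)
    then show ?thesis
      unfolding t(3) using t by (simp add: power_divide power2_eq_square)
  qed
  finally show ?thesis .
qed

lemma Delta_bounds:
  assumes "2 \<le> d" "0 \<le> \<nu>"
  shows "rho_d d / (2 + \<nu>) \<le> Delta d \<nu> \<and> Delta d \<nu> \<le> rho_d d / (2 + \<nu> - rho_d d)"
proof -
  have a1: "cf_coeff d \<nu> 1 = (2 + \<nu>) / rho_d d"
    unfolding cf_coeff_def by simp
  have "2 \<le> cf_coeff d \<nu> (Suc 0)"
    using two_le_cf_coeff_Suc[OF assms] .
  then have "rho_d d < 2 + \<nu>"
    using rho_d_pos[OF assms(1)] unfolding a1[simplified] by (simp add: field_simps)
  then have "1 / cf_coeff d \<nu> 1 = rho_d d / (2 + \<nu>)"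
    "1 / (cf_coeff d \<nu> 1 - 1) = rho_d d / (2 + \<nu> - rho_d d)"
    using rho_d_pos[OF assms(1)] unfolding a1 by (simp_all add: field_simps)
  then show ?thesis
    using cf_limit_first_bounds[of "\<lambda>i. cf_coeff d \<nu> (Suc i)"] two_le_cf_coeff_Suc[OF assms]
    unfolding Delta_eq_cf_limit by simp
qed

lemma one_minus_theta_bounds:
  assumes "2 \<le> d" "0 \<le> \<nu>"
  shows "2 / (real d * (2 + \<nu>)) \<le> 1 - theta d \<nu>"
    and "1 - theta d \<nu> \<le> 2 / (real d * (2 + \<nu> - rho_d d))"
proof -
  have theta: "1 - theta d \<nu> = Delta d \<nu> / beta_d d"
    unfolding theta_def by simp
  have beta: "0 < beta_d d"
    using beta_d_ge_1[OF assms(1)] by simp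
  have rescale: "rho_d d / c / beta_d d = 2 / (real d * c)" for c
    using rho_d_div_beta_d[OF assms(1)] by (metis divide_divide_eq_left divide_divide_eq_left')
  show "2 / (real d * (2 + \<nu>)) \<le> 1 - theta d \<nu>"
    using divide_right_mono[of "rho_d d / (2 + \<nu>)" "Delta d \<nu>" "beta_d d"]
      Delta_bounds[OF assms] beta unfolding theta rescale by simp
  show "1 - theta d \<nu> \<le> 2 / (real d * (2 + \<nu> - rho_d d))"
    using divide_right_mono[of "Delta d \<nu>" "rho_d d / (2 + \<nu> - rho_d d)" "beta_d d"]
      Delta_bounds[OF assms] beta unfolding theta rescale by simp
qed

lemma theta_slope_at_0:
  assumes "3 \<le> d"
  shows "((\<lambda>\<nu>. (theta d \<nu> - theta d 0) / \<nu>) \<longlongrightarrow> real d / (2 * (real d - 2)\<^sup>2)) (at_right 0)"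
proof -
  define b where "b = beta_d d"
  define \<gamma> where "\<gamma> = first_order_coeff (1 / b) (1 / rho_d d)"
  define C where "C = second_order_coeff (1 / b) (1 / rho_d d)"
  have b: "1 < b"
    unfolding b_def using beta_d_gt_1[OF assms] .
  have quotient: "(theta d \<nu> - theta d 0) / \<nu> = (1 / b - Delta d \<nu>) / (b * \<nu>)" for \<nu>
    using b Delta_zero[of d] assms unfolding theta_def b_def by (simp add: field_simps)
  have "\<forall>\<^sub>F \<nu> in at_right 0. \<gamma> / b - \<nu> * C / b \<le> (theta d \<nu> - theta d 0) / \<nu>
      \<and> (theta d \<nu> - theta d 0) / \<nu> \<le> \<gamma> / b"
    using eventually_at_right_less[of "0::real"]
  proof eventually_elim
    case (elim \<nu>)
    have lower: "\<nu> * \<gamma> - \<nu>\<^sup>2 * C \<le> 1 / b - Delta d \<nu>"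
      and upper: "1 / b - Delta d \<nu> \<le> \<nu> * \<gamma>"
      using Delta_first_order_bounds[OF assms, of \<nu>] elim unfolding \<gamma>_def C_def b_def by simp_all
    have "0 \<le> b * \<nu>"
      using b elim by simp
    then have "(\<nu> * \<gamma> - \<nu>\<^sup>2 * C) / (b * \<nu>) \<le> (1 / b - Delta d \<nu>) / (b * \<nu>)"
      "(1 / b - Delta d \<nu>) / (b * \<nu>) \<le> (\<nu> * \<gamma>) / (b * \<nu>)"
      using divide_right_mono lower upper by blast+
    moreover have "(\<nu> * \<gamma> - \<nu>\<^sup>2 * C) / (b * \<nu>) = \<gamma> / b - \<nu> * C / b"
      "(\<nu> * \<gamma>) / (b * \<nu>) = \<gamma> / b"
      using b elim by (simp_all add: field_simps power2_eq_square)
    ultimately show ?case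
      unfolding quotient by simp
  qed
  then have lower: "\<forall>\<^sub>F \<nu> in at_right 0. \<gamma> / b - \<nu> * C / b \<le> (theta d \<nu> - theta d 0) / \<nu>"
    and upper: "\<forall>\<^sub>F \<nu> in at_right 0. (theta d \<nu> - theta d 0) / \<nu> \<le> \<gamma> / b"
    by (auto elim: eventually_mono)
  have "((\<lambda>\<nu>. \<gamma> / b - \<nu> * C / b) \<longlongrightarrow> \<gamma> / b - 0 * C / b) (at_right 0)"
    using b by (intro tendsto_intros) auto
  then have "((\<lambda>\<nu>. \<gamma> / b - \<nu> * C / b) \<longlongrightarrow> \<gamma> / b) (at_right 0)"
    by simp
  then have "((\<lambda>\<nu>. (theta d \<nu> - theta d 0) / \<nu>) \<longlongrightarrow> \<gamma> / b) (at_right 0)"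
    by (rule tendsto_sandwich[OF lower upper _ tendsto_const])
  then show ?thesis
    using first_order_coeff_Delta[OF assms] unfolding \<gamma>_def b_def by simp
qed

lemma theta_decay_at_top:
  assumes "2 \<le> d"
  shows "((\<lambda>\<nu>. \<nu> * (1 - theta d \<nu>)) \<longlongrightarrow> 2 / real d) at_top"
proof -
  have "\<forall>\<^sub>F \<nu> in at_top. 2 / real d * (\<nu> / (\<nu> + 2)) \<le> \<nu> * (1 - theta d \<nu>)
      \<and> \<nu> * (1 - theta d \<nu>) \<le> 2 / real d * (\<nu> / (\<nu> + (2 - rho_d d)))"
    using eventually_gt_at_top[of "0::real"]
  proof eventually_elim
    case (elim \<nu>)
    have "\<nu> * (2 / (real d * (2 + \<nu>))) \<le> \<nu> * (1 - theta d \<nu>)"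
      by (rule mult_left_mono[OF one_minus_theta_bounds(1)[OF assms]]) (use elim in simp_all)
    moreover have "\<nu> * (1 - theta d \<nu>) \<le> \<nu> * (2 / (real d * (2 + \<nu> - rho_d d)))"
      by (rule mult_left_mono[OF one_minus_theta_bounds(2)[OF assms]]) (use elim in simp_all)
    moreover have "\<nu> * (2 / (real d * (2 + \<nu>))) = 2 / real d * (\<nu> / (\<nu> + 2))"
      "\<nu> * (2 / (real d * (2 + \<nu> - rho_d d))) = 2 / real d * (\<nu> / (\<nu> + (2 - rho_d d)))"
      by (simp_all add: field_simps)
    ultimately show ?case
      by simp
  qed
  then have lower: "\<forall>\<^sub>F \<nu> in at_top. 2 / real d * (\<nu> / (\<nu> + 2)) \<le> \<nu> * (1 - theta d \<nu>)"
    and upper: "\<forall>\<^sub>F \<nu> in at_top. \<nu> * (1 - theta d \<nu>) \<le> 2 / real d * (\<nu> / (\<nu> + (2 - rho_d d)))"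
    by (auto elim: eventually_mono)
  have "((\<lambda>\<nu>::real. \<nu> / (\<nu> + k)) \<longlongrightarrow> 1) at_top" for k
    by real_asymp
  then have lim: "((\<lambda>\<nu>. 2 / real d * (\<nu> / (\<nu> + k))) \<longlongrightarrow> 2 / real d * 1) at_top" for k
    by (intro tendsto_mult tendsto_const)
  have "((\<lambda>\<nu>. \<nu> * (1 - theta d \<nu>)) \<longlongrightarrow> 2 / real d * 1) at_top"
    by (rule tendsto_sandwich[OF lower upper lim lim])
  then show ?thesis
    by simp
qed

lemma rho_d_tendsto_0: "rho_d \<longlonglongrightarrow> 0"
  unfolding rho_d_def by real_asymp

lemma theta_decay_in_d:
  assumes "0 < \<nu>"
  shows "((\<lambda>d. real d * (1 - theta d \<nu>)) \<longlongrightarrow> 2 / (\<nu> + 2)) sequentially"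
proof -
  have "\<forall>\<^sub>F d in sequentially. 2 / (\<nu> + 2) \<le> real d * (1 - theta d \<nu>)
      \<and> real d * (1 - theta d \<nu>) \<le> 2 / (2 + \<nu> - rho_d d)"
    using eventually_ge_at_top[of "2::nat"]
  proof eventually_elim
    case (elim d)
    have "real d * (2 / (real d * (2 + \<nu>))) \<le> real d * (1 - theta d \<nu>)"
      by (rule mult_left_mono[OF one_minus_theta_bounds(1)[OF elim]]) (use assms in simp_all)
    moreover have "real d * (1 - theta d \<nu>) \<le> real d * (2 / (real d * (2 + \<nu> - rho_d d)))"
      by (rule mult_left_mono[OF one_minus_theta_bounds(2)[OF elim]]) (use assms in simp_all)
    moreover have "real d * (2 / (real d * (2 + \<nu>))) = 2 / (\<nu> + 2)"
      "real d * (2 / (real d * (2 + \<nu> - rho_d d))) = 2 / (2 + \<nu> - rho_d d)"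
      using elim by (simp_all add: add.commute)
    ultimately show ?case
      by simp
  qed
  then have lower: "\<forall>\<^sub>F d in sequentially. 2 / (\<nu> + 2) \<le> real d * (1 - theta d \<nu>)"
    and upper: "\<forall>\<^sub>F d in sequentially. real d * (1 - theta d \<nu>) \<le> 2 / (2 + \<nu> - rho_d d)"
    by (auto elim: eventually_mono)
  have "(\<lambda>d. 2 / (2 + \<nu> - rho_d d)) \<longlonglongrightarrow> 2 / (2 + \<nu> - 0)"
    using assms by (intro tendsto_intros rho_d_tendsto_0) auto
  then have "(\<lambda>d. 2 / (2 + \<nu> - rho_d d)) \<longlonglongrightarrow> 2 / (\<nu> + 2)"
    by (simp add: add.commute)
  then show ?thesis
    by (rule tendsto_sandwich[OF lower upper tendsto_const])
qed

theorem proposition2p8: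
  shows "(\<forall>d::nat. d \<ge> 3 \<longrightarrow>
            ((\<lambda>\<nu>. (theta d \<nu> - theta d 0) / \<nu>) \<longlongrightarrow> real d / (2 * (real d - 2)^2)) (at_right 0)
          \<and> ((\<lambda>\<nu>. \<nu> * (1 - theta d \<nu>)) \<longlongrightarrow> 2 / real d) at_top)
       \<and> (\<forall>\<nu>::real. \<nu> > 0 \<longrightarrow>
            ((\<lambda>d::nat. real d * (1 - theta d \<nu>)) \<longlongrightarrow> 2 / (\<nu> + 2)) sequentially)"
  using theta_slope_at_0 theta_decay_at_top theta_decay_in_d by simp

end
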